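(* Let $p>1$ and let $\Omega\subset\mathbb R^N$ be open. Let $h\in L^1_{loc}(\Omega,\mathbb R^l)$ be a vector field and let $A_h\in L^1_{loc}(\Omega)$ be a nonnegative function such that $A_h\le \operatorname{div}_L h$ in the distributional sense, and such that $|h|^pA_h^{1-p}\in L^1_{loc}(\Omega)$. Then for every $u\in C^1_0(\Omega)$, $$\int_\Omega |u|^pA_h\,d\xi\le p^p\int_\Omega \frac{|h|^p}{A_h^{p-1}}|\nabla_L u|^p\,d\xi .$$
   Context: Let $\mu=(\mu_{ij})$, $i=1,\dots,l$, $j=1,\dots,N$, be an $l\times N$ matrix whose entries $\mu_{ij}$ and their derivatives $\partial\mu_{ij}/\partial\xi_j$ are continuous on $\mathbb R^N$. Set $X_i=\sum_{j=1}^N\mu_{ij}(\xi)\partial/\partial\xi_j$ and $\nabla_L=(X_1,\dots,X_l)^T=\mu\nabla$, where $\nabla$ is the Euclidean gradient. For a vector field $h=(h_1,\dots,h_l)$, $\operatorname{div}_L h:=\operatorname{div}(\mu^Th)$. For $h\in L^1_{loc}(\Omega,\mathbb R^l)$ and $A\in L^1_{loc}(\Omega)$, "$A\le\operatorname{div}_Lh$ in the distributional sense" means $\int_\Omega\varphi A\,d\xi\le-\int_\Omega\nabla_L\varphi\cdot h\,d\xi$ for every nonnegative $\varphi\in C^1_0(\Omega)$. *)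

theory Defs
  imports "HOL-Analysis.Analysis"
begin

text \<open>The matrix mu(xi) is an element of real^'n^'l
  (rows indexed by 'l, i.e. i = 1..l; columns indexed by 'n, i.e. j = 1..N).\<close>

definition pd :: "(real^'n \<Rightarrow> real) \<Rightarrow> 'n \<Rightarrow> real^'n \<Rightarrow> real" where
  "pd f j x = frechet_derivative f (at x) (axis j 1)"

definition gradL :: "(real^'n \<Rightarrow> real^'n^'l) \<Rightarrow> (real^'n \<Rightarrow> real) \<Rightarrow> real^'n \<Rightarrow> real^'l" where
  "gradL mu f x = (\<chi> i. \<Sum>j\<in>UNIV. mu x $ i $ j * pd f j x)"

text \<open>C^1_0(Omega): continuously differentiable functions with compact support contained in Omega
  (extended by zero to all of R^N).\<close>
definition C1_0 :: "(real^'n) set \<Rightarrow> (real^'n \<Rightarrow> real) \<Rightarrow> bool" where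
  "C1_0 \<Omega> f \<longleftrightarrow> f differentiable_on UNIV \<and> (\<forall>j. continuous_on UNIV (pd f j))
     \<and> compact (closure {x. f x \<noteq> 0}) \<and> closure {x. f x \<noteq> 0} \<subseteq> \<Omega>"

definition L1_loc :: "(real^'n) set \<Rightarrow> (real^'n \<Rightarrow> 'b::euclidean_space) \<Rightarrow> bool" where
  "L1_loc \<Omega> f \<longleftrightarrow> (\<forall>K. compact K \<and> K \<subseteq> \<Omega> \<longrightarrow> f absolutely_integrable_on K)"

definition distr_le_divL ::
  "(real^'n \<Rightarrow> real^'n^'l) \<Rightarrow> (real^'n) set \<Rightarrow> (real^'n \<Rightarrow> real) \<Rightarrow> (real^'n \<Rightarrow> real^'l) \<Rightarrow> bool" where
  "distr_le_divL mu \<Omega> A h \<longleftrightarrow>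
     (\<forall>\<phi>. C1_0 \<Omega> \<phi> \<and> (\<forall>x. \<phi> x \<ge> 0) \<longrightarrow>
        integral \<Omega> (\<lambda>x. \<phi> x * A x) \<le> - integral \<Omega> (\<lambda>x. gradL mu \<phi> x \<bullet> h x))"

end

theory Submission
  imports Defs
begin

(* The test function |u|^p lies in C^1_0 with nabla_L |u|^p = p |u|^(p-1) sgn u nabla_L u, so the
   distributional inequality gives  int |u|^p A <= - int p |u|^(p-1) sgn u (nabla_L u . h).
   Where A > 0, Cauchy-Schwarz and Young's inequality (weighted by A) bound this integrand by
   (1 - 1/p) |u|^p A + p^(p-1) |h|^p A^(1-p) |nabla_L u|^p; where A = 0 it vanishes, as h = 0 a.e.
   there. Integrating and absorbing the first term into the left-hand side gives the factor p^p. *)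

definition abs_powr_deriv :: "real \<Rightarrow> real \<Rightarrow> real" where
  "abs_powr_deriv p t = p * \<bar>t\<bar> powr (p - 1) * sgn t"

lemma abs_powr_deriv_0 [simp]: "abs_powr_deriv p 0 = 0"
  by (simp add: abs_powr_deriv_def)

lemma abs_abs_powr_deriv: "p \<ge> 0 \<Longrightarrow> \<bar>abs_powr_deriv p t\<bar> \<le> p * \<bar>t\<bar> powr (p - 1)"
  by (simp add: abs_powr_deriv_def abs_mult sgn_if)

lemma has_real_derivative_abs_powr:
  fixes p t :: real
  assumes "p > 1"
  shows "((\<lambda>s. \<bar>s\<bar> powr p) has_real_derivative abs_powr_deriv p t) (at t)"
proof (cases "t = 0")
  case True
  have "((\<lambda>s. \<bar>s\<bar> powr (p - 1)) \<longlongrightarrow> \<bar>0\<bar> powr (p - 1)) (at (0::real))"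
    using assms by (intro tendsto_intros) auto
  then have "((\<lambda>s. \<bar>s\<bar> powr (p - 1)) \<longlongrightarrow> 0) (at (0::real))"
    by simp
  then have "((\<lambda>s. norm ((\<bar>s\<bar> powr p - \<bar>0\<bar> powr p) / (s - 0))) \<longlongrightarrow> 0) (at (0::real))"
    by (rule Lim_transform_eventually)
      (use assms in \<open>auto simp: eventually_at_filter powr_diff abs_divide\<close>)
  then show ?thesis
    using True by (simp add: has_field_derivative_iff tendsto_norm_zero_cancel)
next
  case False
  have "sgn t * t = \<bar>t\<bar>"
    by (simp add: sgn_if)
  then have "((\<lambda>s. (sgn t * s) powr p) has_real_derivative p * \<bar>t\<bar> powr (p - 1) * sgn t) (at t)"
    using False by (auto intro!: derivative_eq_intros)
  then show ?thesis
    unfolding abs_powr_deriv_def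
  proof (rule has_field_derivative_transform_within_open)
    show "open {s. 0 < s * t}"
      by (intro open_Collect_less continuous_intros)
  qed (use False in \<open>auto simp: sgn_if zero_less_mult_iff\<close>)
qed

lemma continuous_on_abs_powr_deriv:
  assumes "p > 1"
  shows "continuous_on UNIV (abs_powr_deriv p)"
proof -
  have "isCont (abs_powr_deriv p) t" for t
  proof (cases "t = 0")
    case True
    have "((\<lambda>s. p * \<bar>s\<bar> powr (p - 1)) \<longlongrightarrow> p * \<bar>0\<bar> powr (p - 1)) (at (0::real))"
      using assms by (intro tendsto_intros) auto
    then have "((\<lambda>s. p * \<bar>s\<bar> powr (p - 1)) \<longlongrightarrow> 0) (at (0::real))"
      using assms by simp
    then have "(abs_powr_deriv p \<longlongrightarrow> 0) (at 0)"
      by (rule tendsto_0_le[where K = 1]) (use assms abs_abs_powr_deriv in auto)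
    then show ?thesis
      using True by (simp add: isCont_def)
  next
    case False
    then show ?thesis
      unfolding abs_powr_deriv_def by (intro continuous_intros) auto
  qed
  then show ?thesis
    by (simp add: continuous_on_eq_continuous_at)
qed

lemma weighted_Youngs_inequality:
  fixes p a u g k :: real
  assumes p: "p > 1" and a: "a > 0" and "u \<ge> 0" "g \<ge> 0" "k \<ge> 0"
  shows "p * u powr (p - 1) * (g * k)
    \<le> (1 - 1/p) * (u powr p * a) + p powr (p - 1) * (k powr p / a powr (p - 1) * g powr p)"
proof -
  define q where "q = p / (p - 1)"
  define c where "c = a powr ((p - 1) / p)"
  have q: "q > 1" "1/q + 1/p = 1"
    using p by (auto simp: q_def field_simps)
  have c: "c > 0" "c powr q = a" "c powr p = a powr (p - 1)"
    using p a by (auto simp: c_def q_def powr_powr)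
  have "p * u powr (p - 1) * (g * k) = (u powr (p - 1) * c) * (p * g * k / c)"
    using c by (simp add: field_simps)
  also have "\<dots> \<le> (u powr (p - 1) * c) powr q / q + (p * g * k / c) powr p / p"
    using assms c by (intro Youngs_inequality q) auto
  also have "(u powr (p - 1) * c) powr q = u powr p * a"
    using assms c q by (simp add: powr_mult powr_powr q_def)
  also have "(p * g * k / c) powr p = p powr p * (k powr p / a powr (p - 1) * g powr p)"
    using assms c by (simp add: powr_mult powr_divide field_simps)
  also have "p powr p = p * p powr (p - 1)"
    using p by (simp add: powr_diff)
  finally show ?thesis
    using p by (simp add: q_def field_simps)
qed

lemma neg_abs_powr_deriv_inner_le:
  fixes g k :: "'a::real_inner"
  assumes p: "p > 1" and a: "a \<ge> 0" "a = 0 \<Longrightarrow> k = 0"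
  shows "- (abs_powr_deriv p t * (g \<bullet> k))
    \<le> (1 - 1/p) * (\<bar>t\<bar> powr p * a) + p powr (p - 1) * (norm k powr p / a powr (p - 1) * norm g powr p)"
proof (cases "a = 0")
  case True
  then show ?thesis
    using a p by simp
next
  case False
  have "- (abs_powr_deriv p t * (g \<bullet> k)) \<le> \<bar>abs_powr_deriv p t\<bar> * \<bar>g \<bullet> k\<bar>"
    by (simp add: abs_mult[symmetric])
  also have "\<dots> \<le> p * \<bar>t\<bar> powr (p - 1) * (norm g * norm k)"
    using p by (intro mult_mono abs_abs_powr_deriv Cauchy_Schwarz_ineq2) auto
  also have "\<dots> \<le> (1 - 1/p) * (\<bar>t\<bar> powr p * a) + p powr (p - 1) * (norm k powr p / a powr (p - 1) * norm g powr p)"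
    using False a p by (intro weighted_Youngs_inequality) auto
  finally show ?thesis .
qed

lemma pd_eq_0_outside_support:
  assumes "x \<notin> closure {x. f x \<noteq> 0}"
  shows "pd f j x = 0"
proof -
  have "((\<lambda>_. 0) has_derivative (\<lambda>_. 0)) (at x)"
    by simp
  then have "(f has_derivative (\<lambda>_. 0)) (at x)"
  proof (rule has_derivative_transform_within_open[where s = "- closure {x. f x \<noteq> 0}"])
    show "0 = f y" if "y \<in> - closure {x. f x \<noteq> 0}" for y
      using that closure_subset[of "{x. f x \<noteq> 0}"] by auto
  qed (use assms in auto)
  then show ?thesis
    unfolding pd_def by (metis frechet_derivative_at)
qed

lemma gradL_eq_0_outside_support:
  "x \<notin> closure {x. f x \<noteq> 0} \<Longrightarrow> gradL mu f x = 0"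
  by (simp add: gradL_def pd_eq_0_outside_support vec_eq_iff)

lemma continuous_on_gradL:
  assumes "\<And>i j. continuous_on UNIV (\<lambda>x. mu x $ i $ j)" and "\<And>j. continuous_on UNIV (pd f j)"
  shows "continuous_on UNIV (gradL mu f)"
  unfolding gradL_def by (intro continuous_on_vec_lambda continuous_intros assms)

lemma has_derivative_abs_powr_comp:
  assumes "p > 1" and "f differentiable (at x)"
  shows "((\<lambda>x. \<bar>f x\<bar> powr p) has_derivative
           (\<lambda>v. abs_powr_deriv p (f x) * frechet_derivative f (at x) v)) (at x)"
  using has_derivative_compose[OF assms(2)[unfolded frechet_derivative_works]
      has_real_derivative_abs_powr[OF assms(1), unfolded has_field_derivative_def]]
  by simp

lemma pd_abs_powr_comp:
  "p > 1 \<Longrightarrow> f differentiable (at x) \<Longrightarrow>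
     pd (\<lambda>x. \<bar>f x\<bar> powr p) j x = abs_powr_deriv p (f x) * pd f j x"
  unfolding pd_def by (metis has_derivative_abs_powr_comp frechet_derivative_at)

lemma gradL_abs_powr_comp:
  "p > 1 \<Longrightarrow> f differentiable (at x) \<Longrightarrow>
     gradL mu (\<lambda>x. \<bar>f x\<bar> powr p) x = abs_powr_deriv p (f x) *\<^sub>R gradL mu f x"
  by (simp add: gradL_def pd_abs_powr_comp vec_eq_iff sum_distrib_left algebra_simps)

lemma C1_0_abs_powr_comp:
  assumes p: "p > 1" and f: "C1_0 \<Omega> f"
  shows "C1_0 \<Omega> (\<lambda>x. \<bar>f x\<bar> powr p)"
proof -
  have df: "f differentiable (at x)" for x
    using f by (simp add: C1_0_def differentiable_on_def)
  have "(\<lambda>x. \<bar>f x\<bar> powr p) differentiable (at x)" for x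
    by (rule differentiableI[OF has_derivative_abs_powr_comp[OF p df]])
  then have "(\<lambda>x. \<bar>f x\<bar> powr p) differentiable_on UNIV"
    by (simp add: differentiable_at_imp_differentiable_on)
  moreover have "continuous_on UNIV (pd (\<lambda>x. \<bar>f x\<bar> powr p) j)" for j
  proof -
    have "continuous_on UNIV f"
      using f by (simp add: C1_0_def differentiable_imp_continuous_on)
    then have "continuous_on UNIV (\<lambda>x. abs_powr_deriv p (f x))"
      by (rule continuous_on_compose2[OF continuous_on_abs_powr_deriv[OF p]]) auto
    moreover have "continuous_on UNIV (pd f j)"
      using f by (simp add: C1_0_def)
    ultimately have "continuous_on UNIV (\<lambda>x. abs_powr_deriv p (f x) * pd f j x)"
      by (rule continuous_on_mult)
    moreover have "pd (\<lambda>x. \<bar>f x\<bar> powr p) j = (\<lambda>x. abs_powr_deriv p (f x) * pd f j x)"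
      by (rule ext) (rule pd_abs_powr_comp[OF p df])
    ultimately show ?thesis
      by simp
  qed
  moreover have "{x. \<bar>f x\<bar> powr p \<noteq> 0} = {x. f x \<noteq> 0}"
    by auto
  ultimately show ?thesis
    using f by (simp add: C1_0_def)
qed

lemma integral_le_AE:
  fixes f g :: "'a::euclidean_space \<Rightarrow> real"
  assumes f: "f integrable_on S" and g: "g integrable_on S"
    and le: "AE x in lebesgue. x \<in> S \<longrightarrow> f x \<le> g x"
  shows "integral S f \<le> integral S g"
proof -
  obtain N where "N \<in> null_sets lebesgue" and le_N: "\<And>x. x \<in> S - N \<Longrightarrow> f x \<le> g x"
    using le unfolding eventually_ae_filter by auto
  then have "negligible N"
    by (simp add: negligible_iff_null_sets)
  define f' where "f' = (\<lambda>x. if x \<in> N then g x else f x)"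
  have "integral S f = integral S f'"
    using \<open>negligible N\<close> by (rule integral_spike) (simp add: f'_def)
  also have "\<dots> \<le> integral S g"
  proof (rule integral_le)
    show "f' integrable_on S"
      using f \<open>negligible N\<close> by (rule integrable_spike) (simp add: f'_def)
    show "f' x \<le> g x" if "x \<in> S" for x
      using that le_N by (simp add: f'_def)
  qed (fact g)
  finally show ?thesis .
qed

lemma bilinear_inner: "bilinear ((\<bullet>) :: 'a::euclidean_space \<Rightarrow> 'a \<Rightarrow> real)"
  by (rule bilinear_conv_bounded_bilinear[THEN iffD2, OF bounded_bilinear_inner])

lemma bilinear_integrable_on_L1_loc:
  fixes b :: "'a::euclidean_space \<Rightarrow> 'b::euclidean_space \<Rightarrow> 'c::euclidean_space"
    and f :: "real^'n \<Rightarrow> 'a" and F :: "real^'n \<Rightarrow> 'b"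
  assumes b: "bilinear b" and f: "continuous_on K f" and K: "compact K" "K \<subseteq> \<Omega>"
    and f_0: "\<And>x. x \<notin> K \<Longrightarrow> f x = 0" and F: "L1_loc \<Omega> F"
  shows "(\<lambda>x. b (f x) (F x)) integrable_on \<Omega>"
proof -
  have K_lebesgue: "K \<in> sets lebesgue"
    using K by (simp add: fmeasurableD lmeasurable_compact)
  have "(\<lambda>x. b (f x) (F x)) absolutely_integrable_on K"
  proof (rule absolutely_integrable_bounded_measurable_product[OF b _ K_lebesgue])
    show "f \<in> borel_measurable (lebesgue_on K)"
      using f K_lebesgue by (rule continuous_imp_measurable_on_sets_lebesgue)
    show "bounded (f ` K)"
      using f K by (simp add: compact_continuous_image compact_imp_bounded)
    show "F absolutely_integrable_on K"
      using F K by (simp add: L1_loc_def)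
  qed
  then have "(\<lambda>x. b (f x) (F x)) integrable_on K"
    by (rule set_lebesgue_integral_eq_integral(1))
  then show ?thesis
    by (rule integrable_on_superset) (use K f_0 bilinear_lzero[OF b] in auto)
qed

lemma distr_le_divL_abs_powr:
  assumes p: "p > 1" and div: "distr_le_divL mu \<Omega> A h" and u: "C1_0 \<Omega> u"
  shows "integral \<Omega> (\<lambda>x. \<bar>u x\<bar> powr p * A x)
    \<le> - integral \<Omega> (\<lambda>x. abs_powr_deriv p (u x) * (gradL mu u x \<bullet> h x))"
proof -
  have "u differentiable (at x)" for x
    using u by (simp add: C1_0_def differentiable_on_def)
  then have grad: "gradL mu (\<lambda>x. \<bar>u x\<bar> powr p) x \<bullet> h x = abs_powr_deriv p (u x) * (gradL mu u x \<bullet> h x)"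
    for x by (simp add: gradL_abs_powr_comp[OF p])
  have "integral \<Omega> (\<lambda>x. \<bar>u x\<bar> powr p * A x)
      \<le> - integral \<Omega> (\<lambda>x. gradL mu (\<lambda>x. \<bar>u x\<bar> powr p) x \<bullet> h x)"
    using div C1_0_abs_powr_comp[OF p u] unfolding distr_le_divL_def by auto
  then show ?thesis
    by (simp only: grad)
qed

lemma Hardy_integrands_integrable_on:
  assumes mu_cont: "\<And>i j. continuous_on UNIV (\<lambda>x. mu x $ i $ j)" and p: "p > 1"
    and h_loc: "L1_loc \<Omega> h" and A_loc: "L1_loc \<Omega> A"
    and w_loc: "L1_loc \<Omega> (\<lambda>x. norm (h x) powr p * A x powr (1 - p))"
    and u: "C1_0 \<Omega> u"
  shows "(\<lambda>x. \<bar>u x\<bar> powr p * A x) integrable_on \<Omega>"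
    and "(\<lambda>x. norm (h x) powr p / A x powr (p - 1) * norm (gradL mu u x) powr p) integrable_on \<Omega>"
    and "(\<lambda>x. abs_powr_deriv p (u x) * (gradL mu u x \<bullet> h x)) integrable_on \<Omega>"
proof -
  define K where "K = closure {x. u x \<noteq> 0}"
  have K: "compact K" "K \<subseteq> \<Omega>" and du: "\<And>x. u differentiable (at x)"
    using u by (auto simp: C1_0_def K_def differentiable_on_def)
  have outside_K: "\<bar>u x\<bar> powr p = 0" "gradL mu u x = 0" if "x \<notin> K" for x
    using that closure_subset[of "{x. u x \<noteq> 0}"] gradL_eq_0_outside_support[of x u mu]
    by (auto simp: K_def)
  have C_abs_powr: "C1_0 \<Omega> (\<lambda>x. \<bar>u x\<bar> powr p)"
    using p u by (rule C1_0_abs_powr_comp)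
  have grad_u_cont: "continuous_on UNIV (gradL mu u)"
    using u by (intro continuous_on_gradL[OF mu_cont]) (simp add: C1_0_def)
  have "continuous_on UNIV (\<lambda>x. \<bar>u x\<bar> powr p)"
    using C_abs_powr by (simp add: C1_0_def differentiable_imp_continuous_on)
  then show "(\<lambda>x. \<bar>u x\<bar> powr p * A x) integrable_on \<Omega>"
    by (rule bilinear_integrable_on_L1_loc[OF bilinear_times continuous_on_subset K
          outside_K(1) A_loc]) auto
  have "continuous_on UNIV (\<lambda>x. norm (gradL mu u x) powr p)"
    using continuous_on_powr'[OF continuous_on_norm[OF grad_u_cont] continuous_on_const] p by simp
  then have "(\<lambda>x. norm (gradL mu u x) powr p * (norm (h x) powr p * A x powr (1 - p))) integrable_on \<Omega>"
    using p outside_K(2)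
    by (intro bilinear_integrable_on_L1_loc[OF bilinear_times _ K _ w_loc])
      (auto intro: continuous_on_subset)
  then show "(\<lambda>x. norm (h x) powr p / A x powr (p - 1) * norm (gradL mu u x) powr p) integrable_on \<Omega>"
    using powr_minus[of _ "p - 1"] by (simp add: divide_inverse mult_ac)
  have "continuous_on UNIV (gradL mu (\<lambda>x. \<bar>u x\<bar> powr p))"
    using C_abs_powr by (intro continuous_on_gradL[OF mu_cont]) (simp add: C1_0_def)
  then have "(\<lambda>x. gradL mu (\<lambda>x. \<bar>u x\<bar> powr p) x \<bullet> h x) integrable_on \<Omega>"
    by (rule bilinear_integrable_on_L1_loc[OF bilinear_inner continuous_on_subset K _ h_loc])
      (simp_all add: gradL_abs_powr_comp[OF p du] outside_K)
  then show "(\<lambda>x. abs_powr_deriv p (u x) * (gradL mu u x \<bullet> h x)) integrable_on \<Omega>"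
    by (simp add: gradL_abs_powr_comp[OF p du])
qed

theorem mainTheorem1:
  fixes mu :: "real^'n \<Rightarrow> real^'n^'l"
    and \<Omega> :: "(real^'n) set"
    and h :: "real^'n \<Rightarrow> real^'l"
    and A :: "real^'n \<Rightarrow> real"
    and u :: "real^'n \<Rightarrow> real"
    and p :: real
  assumes mu_cont: "\<And>i j. continuous_on UNIV (\<lambda>x. mu x $ i $ j)"
    and mu_deriv: "\<And>i j. \<exists>d. continuous_on UNIV d \<and>
          (\<forall>x. ((\<lambda>t. mu (x + t *\<^sub>R axis j 1) $ i $ j) has_real_derivative d x) (at 0))"
    and p: "p > 1"
    and \<Omega>: "open \<Omega>"
    and h_loc: "L1_loc \<Omega> h"
    and A_loc: "L1_loc \<Omega> A"
    and A_nonneg: "\<forall>x\<in>\<Omega>. A x \<ge> 0"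
    and div: "distr_le_divL mu \<Omega> A h"
    and h_zero: "AE x in lebesgue. x \<in> \<Omega> \<and> A x = 0 \<longrightarrow> h x = 0"
    and w_loc: "L1_loc \<Omega> (\<lambda>x. norm (h x) powr p * A x powr (1 - p))"
    and u: "C1_0 \<Omega> u"
  shows "integral \<Omega> (\<lambda>x. \<bar>u x\<bar> powr p * A x)
         \<le> p powr p * integral \<Omega> (\<lambda>x. norm (h x) powr p / A x powr (p - 1) * norm (gradL mu u x) powr p)"
proof -
  define I where "I = integral \<Omega> (\<lambda>x. \<bar>u x\<bar> powr p * A x)"
  define J where "J = integral \<Omega> (\<lambda>x. norm (h x) powr p / A x powr (p - 1) * norm (gradL mu u x) powr p)"
  note integrable = Hardy_integrands_integrable_on[OF mu_cont p h_loc A_loc w_loc u]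
  have "I \<le> integral \<Omega> (\<lambda>x. - (abs_powr_deriv p (u x) * (gradL mu u x \<bullet> h x)))"
    using distr_le_divL_abs_powr[OF p div u] by (simp add: I_def integral_neg)
  also have "\<dots> \<le> integral \<Omega> (\<lambda>x. (1 - 1/p) * (\<bar>u x\<bar> powr p * A x) + p powr (p - 1) *
      (norm (h x) powr p / A x powr (p - 1) * norm (gradL mu u x) powr p))"
  proof (rule integral_le_AE)
    show "AE x in lebesgue. x \<in> \<Omega> \<longrightarrow> - (abs_powr_deriv p (u x) * (gradL mu u x \<bullet> h x))
        \<le> (1 - 1/p) * (\<bar>u x\<bar> powr p * A x) +
          p powr (p - 1) * (norm (h x) powr p / A x powr (p - 1) * norm (gradL mu u x) powr p)"
      using h_zero
      by eventually_elim (use A_nonneg in \<open>intro impI neg_abs_powr_deriv_inner_le[OF p]; auto\<close>)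
  qed (intro integrable_neg integrable_add integrable_on_mult_right integrable)+
  also have "\<dots> = (1 - 1/p) * I + p powr (p - 1) * J"
    using integral_add[OF integrable_on_mult_right[OF integrable(1)]
        integrable_on_mult_right[OF integrable(2)]]
    by (simp only: I_def J_def integral_mult_right)
  finally have "I \<le> (1 - 1/p) * I + p powr (p - 1) * J" .
  then have "I \<le> p * p powr (p - 1) * J"
    using p by (simp add: field_simps)
  then show ?thesis
    using p by (simp add: I_def J_def powr_diff)
qed

end
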